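(* Consider the deterministic split-node max-neighbour algorithm described in the context, on a dynamic graph $(G_r)_{r\ge1}$ with node set $V$. For every round $r\ge1$, \[ \phi(V,w_r)\le\phi(V,w_{r-1})-t_{r-1}/60, \] where $t_r:=\max_{u,v\in V}|w_r(u)-w_r(v)|$.
   Context: Setting: a fixed set $V$ of $n$ nodes, a sequence of connected graphs $G_r=(V,E_r)$ ($r\ge1$), $N_r(v)$ the neighbours of $v$ in $G_r$, non-negative real loads $w_0(v)$, and $w_r(v)$ the load of $v$ at the end of round $r$. For $w:V\to\mathbb{R}_{\ge0}$, $\phi(V,w)=\sum_{\{u,v\}\subseteq V}|w(u)-w(v)|$ (sum over unordered pairs of distinct nodes). Algorithm: each node $v$ is split into two virtual nodes $v_s$ (sender) and $v_a$ (receiver). In round $r$: set $w_r^1(v_s)=w_r^1(v_a)=w_{r-1}(v)/2$. Each $v_s$ sends a proposal to $u_a$ where $u\in N_r(v)$ maximizes $|w_{r-1}(u)-w_{r-1}(v)|$ (ties broken by a fixed deterministic rule). Each $v_a$ that received proposals accepts exactly one, from $u_s$ with $u$ maximizing $|w_{r-1}(u)-w_{r-1}(v)|$ among proposers (deterministic tie-breaking). For each accepted pair $(u_s,v_a)$, set both virtual loads to $(w_r^1(u_s)+w_r^1(v_a))/2$; other virtual nodes keep their value; then $w_r(v)$ is the sum of the two virtual loads of $v$. *)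

theory Defs
  imports Complex_Main
begin

definition connected_graph :: "'a set \<Rightarrow> ('a \<Rightarrow> 'a \<Rightarrow> bool) \<Rightarrow> bool" where
  "connected_graph V E \<longleftrightarrow>
     (\<forall>u v. E u v \<longrightarrow> u \<in> V \<and> v \<in> V \<and> u \<noteq> v \<and> E v u) \<and>
     (\<forall>u\<in>V. \<forall>v\<in>V. (u, v) \<in> {(x, y). E x y}\<^sup>*)"

definition nbrs :: "'a set \<Rightarrow> ('a \<Rightarrow> 'a \<Rightarrow> bool) \<Rightarrow> 'a \<Rightarrow> 'a set" where
  "nbrs V E v = {u \<in> V. E v u}"

definition phi :: "'a set \<Rightarrow> ('a \<Rightarrow> real) \<Rightarrow> real" where
  "phi V w = (\<Sum>(u, v) \<in> {(u, v). u \<in> V \<and> v \<in> V \<and> u \<noteq> v}. \<bar>w u - w v\<bar>) / 2"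

definition spread :: "'a set \<Rightarrow> ('a \<Rightarrow> real) \<Rightarrow> real" where
  "spread V w = Max {\<bar>w u - w v\<bar> | u v. u \<in> V \<and> v \<in> V}"

text \<open>Proposal of sender v_s (None = no neighbour, no proposal): a neighbour
  maximizing the load difference. Any (deterministic) tie-breaking is allowed.\<close>
definition valid_proposals :: "'a set \<Rightarrow> ('a \<Rightarrow> 'a \<Rightarrow> bool) \<Rightarrow> ('a \<Rightarrow> real) \<Rightarrow> ('a \<Rightarrow> 'a option) \<Rightarrow> bool" where
  "valid_proposals V E w prp \<longleftrightarrow>
     (\<forall>v\<in>V. (prp v = None \<longleftrightarrow> nbrs V E v = {}) \<and>
        (\<forall>u. prp v = Some u \<longrightarrow> u \<in> nbrs V E v \<and>
           (\<forall>x \<in> nbrs V E v. \<bar>w x - w v\<bar> \<le> \<bar>w u - w v\<bar>)))"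

definition proposers :: "'a set \<Rightarrow> ('a \<Rightarrow> 'a option) \<Rightarrow> 'a \<Rightarrow> 'a set" where
  "proposers V prp v = {u \<in> V. prp u = Some v}"

text \<open>Receiver v_a accepts exactly one proposal (if any), from a proposer maximizing
  the load difference (any tie-breaking allowed).\<close>
definition valid_acceptance :: "'a set \<Rightarrow> ('a \<Rightarrow> real) \<Rightarrow> ('a \<Rightarrow> 'a option) \<Rightarrow> ('a \<Rightarrow> 'a option) \<Rightarrow> bool" where
  "valid_acceptance V w prp acc \<longleftrightarrow>
     (\<forall>v\<in>V. (acc v = None \<longleftrightarrow> proposers V prp v = {}) \<and>
        (\<forall>u. acc v = Some u \<longrightarrow> u \<in> proposers V prp v \<and>
           (\<forall>x \<in> proposers V prp v. \<bar>w x - w v\<bar> \<le> \<bar>w u - w v\<bar>)))"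

definition sender_load :: "('a \<Rightarrow> real) \<Rightarrow> ('a \<Rightarrow> 'a option) \<Rightarrow> ('a \<Rightarrow> 'a option) \<Rightarrow> 'a \<Rightarrow> real" where
  "sender_load w prp acc v =
     (case prp v of
        None \<Rightarrow> w v / 2
      | Some u \<Rightarrow> (if acc u = Some v then (w v / 2 + w u / 2) / 2 else w v / 2))"

definition receiver_load :: "('a \<Rightarrow> real) \<Rightarrow> ('a \<Rightarrow> 'a option) \<Rightarrow> 'a \<Rightarrow> real" where
  "receiver_load w acc v =
     (case acc v of
        None \<Rightarrow> w v / 2
      | Some u \<Rightarrow> (w u / 2 + w v / 2) / 2)"

definition round_result :: "('a \<Rightarrow> real) \<Rightarrow> ('a \<Rightarrow> 'a option) \<Rightarrow> ('a \<Rightarrow> 'a option) \<Rightarrow> 'a \<Rightarrow> real" where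
  "round_result w prp acc v = sender_load w prp acc v + receiver_load w acc v"

end

theory Submission
  imports Defs "HOL-Analysis.Lebesgue_Measure"
begin

(* Split every node into a sender and a receiver, each carrying half of its load.  The accepted
   proposals form a matching of these virtual nodes, and a round replaces every virtual load by
   the average over its matched pair.  Averaging along a matching lowers the pairwise potential
   by at least the total difference across the matching, while merging the virtual nodes back
   does not increase it.  That total difference dominates the spread: for every level s between
   the minimum and the maximum load, connectivity yields an edge crossing s; the sender at its
   upper end proposes to a receiver u whose accepted partner is at least as far from u, so s lies
   within twice u's accepted difference of x u.  Covering the range of loads by these intervals
   gives spread <= 4 * (sum of accepted differences), hence a drop of at least spread / 32. *)

definition diff_sum :: "'b set \<Rightarrow> ('b \<Rightarrow> real) \<Rightarrow> real" where
  "diff_sum W z = (\<Sum>k\<in>W. \<Sum>l\<in>W. \<bar>z k - z l\<bar>)"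

lemma phi_eq_diff_sum:
  assumes "finite V"
  shows "phi V z = diff_sum V z / 2"
proof -
  have "(\<Sum>(u, v) \<in> {(u, v). u \<in> V \<and> v \<in> V \<and> u \<noteq> v}. \<bar>z u - z v\<bar>)
      = (\<Sum>(u, v) \<in> V \<times> V. \<bar>z u - z v\<bar>)"
    by (rule sum.mono_neutral_left) (use assms in auto)
  then show ?thesis
    by (simp add: phi_def diff_sum_def sum.cartesian_product)
qed

lemma phi_cong: "\<forall>v\<in>V. z v = z' v \<Longrightarrow> phi V z = phi V z'"
  unfolding phi_def by (intro arg_cong [where f = "\<lambda>t. t / 2"] sum.cong) auto

lemma sum_pair_bool: "(\<Sum>k\<in>V \<times> UNIV. f k) = (\<Sum>v\<in>V. f (v, True) + f (v, False))"
proof -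
  have "(\<Sum>k\<in>V \<times> UNIV. f k) = (\<Sum>v\<in>V. \<Sum>b\<in>UNIV. f (v, b))"
    by (simp add: sum.cartesian_product)
  then show ?thesis
    by (simp add: UNIV_bool add.commute)
qed

lemma abs_diff_halves: "\<bar>a / 2 - b / 2\<bar> = \<bar>a - b\<bar> / (2::real)"
proof -
  have "a / 2 - b / 2 = (a - b) / 2"
    by (simp add: field_simps)
  then show ?thesis
    by (simp only: abs_divide)
qed

lemma diff_sum_halves:
  "diff_sum (V \<times> (UNIV :: bool set)) (\<lambda>k. x (fst k) / 2) = 2 * diff_sum V x"
  by (simp add: diff_sum_def sum_pair_bool abs_diff_halves sum_distrib_left)

lemma diff_sum_merge_le:
  "diff_sum V (\<lambda>v. z (v, True) + z (v, False)) \<le> diff_sum (V \<times> UNIV) z / 2"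
proof -
  have "\<bar>a + b - (c + d)\<bar> \<le> (\<bar>a - c\<bar> + \<bar>b - d\<bar> + \<bar>a - d\<bar> + \<bar>b - c\<bar>) / 2" for a b c d :: real
    by (simp add: abs_if)
  then have "diff_sum V (\<lambda>v. z (v, True) + z (v, False))
      \<le> (\<Sum>u\<in>V. \<Sum>v\<in>V. (\<bar>z (u, True) - z (v, True)\<bar> + \<bar>z (u, False) - z (v, False)\<bar>
            + \<bar>z (u, True) - z (v, False)\<bar> + \<bar>z (u, False) - z (v, True)\<bar>) / 2)"
    unfolding diff_sum_def by (intro sum_mono)
  also have "\<dots> = diff_sum (V \<times> UNIV) z / 2"
    by (simp add: diff_sum_def sum_pair_bool sum.distrib flip: sum_divide_distrib)
  finally show ?thesis .
qed

(* The pair {k, tau k} contributes its own difference |z k - z (tau k)| twice to the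
   right-hand side but nothing to the left-hand side. *)
lemma diff_sum_average_involution_le:
  assumes "finite W" and maps_to: "\<forall>k\<in>W. \<tau> k \<in> W" and involutive: "\<forall>k\<in>W. \<tau> (\<tau> k) = k"
  shows "diff_sum W (\<lambda>k. (z k + z (\<tau> k)) / 2) \<le> diff_sum W z - (\<Sum>k\<in>W. \<bar>z k - z (\<tau> k)\<bar>)"
proof -
  have bij: "bij_betw \<tau> W W"
    by (rule bij_betwI [where g = \<tau>]) (use maps_to involutive in auto)
  have pointwise: "\<bar>(z k + z (\<tau> k)) / 2 - (z l + z (\<tau> l)) / 2\<bar>
      \<le> (\<bar>z k - z l\<bar> + \<bar>z (\<tau> k) - z (\<tau> l)\<bar>) / 2 - (if l = \<tau> k then \<bar>z k - z (\<tau> k)\<bar> else 0)"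
    if "k \<in> W" for k l
  proof (cases "l = \<tau> k")
    case True
    then show ?thesis using involutive that by (simp add: abs_minus_commute)
  next
    case False
    have "\<bar>(z k + z (\<tau> k)) / 2 - (z l + z (\<tau> l)) / 2\<bar> = \<bar>(z k - z l) + (z (\<tau> k) - z (\<tau> l))\<bar> / 2"
      unfolding abs_diff_halves by (simp add: algebra_simps)
    also have "\<dots> \<le> (\<bar>z k - z l\<bar> + \<bar>z (\<tau> k) - z (\<tau> l)\<bar>) / 2"
      by (intro divide_right_mono abs_triangle_ineq) simp
    finally show ?thesis
      using False by simp
  qed
  have permuted: "(\<Sum>k\<in>W. \<Sum>l\<in>W. \<bar>z (\<tau> k) - z (\<tau> l)\<bar>) = diff_sum W z"
    unfolding diff_sum_def
    using sum.reindex_bij_betw [OF bij, of "\<lambda>l. \<bar>z _ - z l\<bar>"]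
      sum.reindex_bij_betw [OF bij, of "\<lambda>k. \<Sum>l\<in>W. \<bar>z k - z l\<bar>"]
    by simp
  have matched: "(\<Sum>k\<in>W. \<Sum>l\<in>W. if l = \<tau> k then \<bar>z k - z (\<tau> k)\<bar> else 0) = (\<Sum>k\<in>W. \<bar>z k - z (\<tau> k)\<bar>)"
    using assms(1) maps_to by (auto intro!: sum.cong)
  have "diff_sum W (\<lambda>k. (z k + z (\<tau> k)) / 2)
      \<le> (\<Sum>k\<in>W. \<Sum>l\<in>W. (\<bar>z k - z l\<bar> + \<bar>z (\<tau> k) - z (\<tau> l)\<bar>) / 2
            - (if l = \<tau> k then \<bar>z k - z (\<tau> k)\<bar> else 0))"
    unfolding diff_sum_def by (intro sum_mono pointwise)
  also have "\<dots> = (diff_sum W z + (\<Sum>k\<in>W. \<Sum>l\<in>W. \<bar>z (\<tau> k) - z (\<tau> l)\<bar>)) / 2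
      - (\<Sum>k\<in>W. \<Sum>l\<in>W. if l = \<tau> k then \<bar>z k - z (\<tau> k)\<bar> else 0)"
    by (simp add: diff_sum_def sum_subtractf sum.distrib flip: sum_divide_distrib)
  finally show ?thesis
    using permuted matched by simp
qed

lemma rtrancl_leaves_set:
  assumes "(p, q) \<in> R\<^sup>*" and "p \<in> H" and "q \<notin> H"
  shows "\<exists>a b. (a, b) \<in> R \<and> a \<in> H \<and> b \<notin> H"
  using assms by (induction rule: rtrancl_induct) blast+

lemma length_le_sum_of_interval_cover:
  fixes c r :: "'b \<Rightarrow> real"
  assumes "finite V" and "\<forall>u\<in>V. r u \<ge> 0"
    and cover: "{lo..<hi} \<subseteq> (\<Union>u\<in>V. {c u - r u .. c u + r u})"
  shows "hi - lo \<le> (\<Sum>u\<in>V. 2 * r u)"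
proof (cases "lo \<le> hi")
  case True
  have "ennreal (hi - lo) = emeasure lborel {lo..<hi}"
    using True by simp
  also have "\<dots> \<le> emeasure lborel (\<Union>u\<in>V. {c u - r u .. c u + r u})"
    by (rule emeasure_mono [OF cover]) (use assms(1) in auto)
  also have "\<dots> \<le> (\<Sum>u\<in>V. emeasure lborel {c u - r u .. c u + r u})"
    by (rule emeasure_subadditive_finite) (use assms(1) in auto)
  also have "\<dots> = (\<Sum>u\<in>V. ennreal (2 * r u))"
    by (rule sum.cong) (use assms(2) in auto)
  also have "\<dots> = ennreal (\<Sum>u\<in>V. 2 * r u)"
    using assms(2) by simp
  finally show ?thesis
    using assms(2) by (subst (asm) ennreal_le_iff) (auto intro: sum_nonneg)
next
  case False
  have "0 \<le> (\<Sum>u\<in>V. 2 * r u)"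
    using assms(2) by (simp add: sum_nonneg)
  then show ?thesis
    using False by simp
qed

definition accepted_gap :: "('a \<Rightarrow> real) \<Rightarrow> ('a \<Rightarrow> 'a option) \<Rightarrow> 'a \<Rightarrow> real" where
  "accepted_gap x acc v = (case acc v of None \<Rightarrow> 0 | Some u \<Rightarrow> \<bar>x u - x v\<bar>)"

(* (v, True) is the sender v_s and (v, False) the receiver v_a; unmatched virtual nodes are
   their own partners. *)
definition virtual_partner ::
    "('a \<Rightarrow> 'a option) \<Rightarrow> ('a \<Rightarrow> 'a option) \<Rightarrow> 'a \<times> bool \<Rightarrow> 'a \<times> bool" where
  "virtual_partner prp acc =
     (\<lambda>(v, sender).
        if sender then
          (case prp v of
             None \<Rightarrow> (v, True)
           | Some u \<Rightarrow> if acc u = Some v then (u, False) else (v, True))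
        else
          (case acc v of None \<Rightarrow> (v, False) | Some u \<Rightarrow> (u, True)))"

lemma round_result_eq_partner_averages:
  fixes x :: "'a \<Rightarrow> real" and prp acc :: "'a \<Rightarrow> 'a option"
  defines "y \<equiv> \<lambda>k. x (fst k) / 2"
  defines "y' \<equiv> \<lambda>k. (y k + y (virtual_partner prp acc k)) / 2"
  shows "round_result x prp acc v = y' (v, True) + y' (v, False)"
  by (auto simp: round_result_def sender_load_def receiver_load_def y'_def y_def
      virtual_partner_def split: option.split)

context
  fixes V :: "'a set" and E :: "'a \<Rightarrow> 'a \<Rightarrow> bool" and x :: "'a \<Rightarrow> real"
    and prp acc :: "'a \<Rightarrow> 'a option"
  assumes proposals: "valid_proposals V E x prp"
    and acceptance: "valid_acceptance V x prp acc"
begin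

lemma proposal_target:
  assumes "v \<in> V" and "prp v = Some u"
  shows "u \<in> V" and "\<forall>y\<in>nbrs V E v. \<bar>x y - x v\<bar> \<le> \<bar>x u - x v\<bar>"
  using proposals assms unfolding valid_proposals_def nbrs_def by auto

lemma accepted_proposer:
  assumes "v \<in> V" and "acc v = Some u"
  shows "u \<in> V" and "prp u = Some v"
  using acceptance assms unfolding valid_acceptance_def proposers_def by auto

lemma proposal_gap_le_accepted_gap:
  assumes "v \<in> V" and "prp v = Some u"
  shows "\<bar>x u - x v\<bar> \<le> accepted_gap x acc u"
proof -
  have "u \<in> V" and proposer: "v \<in> proposers V prp u"
    using proposal_target [OF assms] assms by (auto simp: proposers_def)
  then obtain y where "acc u = Some y" and "\<bar>x v - x u\<bar> \<le> \<bar>x y - x u\<bar>"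
    using acceptance unfolding valid_acceptance_def by (metis empty_iff not_Some_eq)
  then show ?thesis
    by (simp add: accepted_gap_def abs_minus_commute)
qed

lemma virtual_partner_mem:
  assumes "v \<in> V"
  shows "fst (virtual_partner prp acc (v, sender)) \<in> V"
proof (cases sender)
  case True
  then show ?thesis
    using assms proposal_target(1) [OF assms]
    by (cases "prp v") (simp_all add: virtual_partner_def)
next
  case False
  then show ?thesis
    using assms accepted_proposer(1) [OF assms]
    by (cases "acc v") (simp_all add: virtual_partner_def)
qed

lemma virtual_partner_involutive:
  assumes "v \<in> V"
  shows "virtual_partner prp acc (virtual_partner prp acc (v, sender)) = (v, sender)"
proof (cases sender)
  case True
  then show ?thesis
    by (cases "prp v") (simp_all add: virtual_partner_def)
next
  case False
  then show ?thesis
    using accepted_proposer(2) [OF assms]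
    by (cases "acc v") (simp_all add: virtual_partner_def)
qed

lemma phi_round_result_le:
  assumes "finite V"
  shows "phi V (round_result x prp acc) \<le> phi V x - (\<Sum>u\<in>V. accepted_gap x acc u) / 8"
proof -
  define y where "y = (\<lambda>k :: 'a \<times> bool. x (fst k) / 2)"
  define \<tau> where "\<tau> = virtual_partner prp acc"
  have receiver_gap: "\<bar>y (u, False) - y (\<tau> (u, False))\<bar> = accepted_gap x acc u / 2" for u
    by (auto simp: y_def \<tau>_def virtual_partner_def accepted_gap_def abs_diff_halves
        abs_minus_commute split: option.split)
  have "(\<Sum>u\<in>V. accepted_gap x acc u) / 2 = (\<Sum>u\<in>V. \<bar>y (u, False) - y (\<tau> (u, False))\<bar>)"
    by (simp add: receiver_gap sum_divide_distrib)
  also have "\<dots> \<le> (\<Sum>k\<in>V \<times> UNIV. \<bar>y k - y (\<tau> k)\<bar>)"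
    by (simp add: sum_pair_bool sum_mono)
  finally have matching_gap: "(\<Sum>u\<in>V. accepted_gap x acc u) / 2 \<le> (\<Sum>k\<in>V \<times> UNIV. \<bar>y k - y (\<tau> k)\<bar>)" .
  define y' where "y' = (\<lambda>k. (y k + y (\<tau> k)) / 2)"
  have merged: "round_result x prp acc = (\<lambda>v. y' (v, True) + y' (v, False))"
    by (simp add: fun_eq_iff y'_def y_def \<tau>_def round_result_eq_partner_averages)
  have "diff_sum V (round_result x prp acc) \<le> diff_sum (V \<times> UNIV) y' / 2"
    unfolding merged by (rule diff_sum_merge_le)
  also have "\<dots> \<le> (diff_sum (V \<times> UNIV) y - (\<Sum>k\<in>V \<times> UNIV. \<bar>y k - y (\<tau> k)\<bar>)) / 2"
    unfolding y'_def \<tau>_def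
    by (intro divide_right_mono diff_sum_average_involution_le)
      (use assms virtual_partner_mem virtual_partner_involutive in \<open>auto simp: mem_Times_iff\<close>)
  finally have "diff_sum V (round_result x prp acc)
      \<le> (diff_sum (V \<times> UNIV) y - (\<Sum>k\<in>V \<times> UNIV. \<bar>y k - y (\<tau> k)\<bar>)) / 2" .
  moreover have "diff_sum (V \<times> UNIV) y = 2 * diff_sum V x"
    unfolding y_def by (rule diff_sum_halves)
  ultimately show ?thesis
    using matching_gap unfolding phi_eq_diff_sum [OF assms] by argo
qed

lemma level_near_accepted_match:
  assumes "connected_graph V E" and "p \<in> V" and "q \<in> V" and "x q \<le> s" and "s < x p"
  shows "\<exists>u\<in>V. \<bar>s - x u\<bar> \<le> 2 * accepted_gap x acc u"
proof -
  have "(p, q) \<in> {(u, v). E u v}\<^sup>*"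
    using assms(1-3) unfolding connected_graph_def by blast
  then have "\<exists>a b. (a, b) \<in> {(u, v). E u v} \<and> a \<in> {v. s < x v} \<and> b \<notin> {v. s < x v}"
    by (rule rtrancl_leaves_set) (use assms(4,5) in auto)
  then obtain a b where "E a b" and above: "s < x a" and below: "x b \<le> s"
    by auto
  then have "a \<in> V" and "b \<in> nbrs V E a"
    using assms(1) unfolding connected_graph_def nbrs_def by auto
  then obtain u where "prp a = Some u"
    using proposals unfolding valid_proposals_def by blast
  with \<open>a \<in> V\<close> \<open>b \<in> nbrs V E a\<close> have "u \<in> V" and "\<bar>x b - x a\<bar> \<le> \<bar>x u - x a\<bar>"
    and "\<bar>x u - x a\<bar> \<le> accepted_gap x acc u"
    using proposal_target proposal_gap_le_accepted_gap by blast+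
  moreover have "\<bar>s - x a\<bar> \<le> \<bar>x b - x a\<bar>"
    using above below by simp
  ultimately show ?thesis
    by (intro bexI [of _ u]) simp_all
qed

lemma spread_le_accepted_gaps:
  assumes "finite V" and "V \<noteq> {}" and "connected_graph V E"
  shows "spread V x \<le> 4 * (\<Sum>u\<in>V. accepted_gap x acc u)"
proof -
  have "finite {\<bar>x u - x v\<bar> | u v. u \<in> V \<and> v \<in> V}"
    using assms(1) by (simp add: finite_image_set2)
  then have "spread V x \<in> {\<bar>x u - x v\<bar> | u v. u \<in> V \<and> v \<in> V}"
    unfolding spread_def by (rule Max_in) (use assms(2) in blast)
  then obtain u v where "u \<in> V" "v \<in> V" and "spread V x = \<bar>x u - x v\<bar>"
    by blast
  then obtain p q where "p \<in> V" "q \<in> V" and spread: "spread V x = x p - x q"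
    by (cases "x v \<le> x u") (auto simp: abs_if)
  have cover: "{x q..<x p} \<subseteq> (\<Union>u\<in>V. {x u - 2 * accepted_gap x acc u .. x u + 2 * accepted_gap x acc u})"
    using level_near_accepted_match [OF assms(3) \<open>p \<in> V\<close> \<open>q \<in> V\<close>]
    by (fastforce simp: abs_le_iff)
  have "x p - x q \<le> (\<Sum>u\<in>V. 2 * (2 * accepted_gap x acc u))"
    by (rule length_le_sum_of_interval_cover [OF assms(1) _ cover]) (simp add: accepted_gap_def split: option.split)
  then show ?thesis
    by (simp add: spread sum_distrib_left)
qed

lemma phi_round_result_le_spread:
  assumes "finite V" and "V \<noteq> {}" and "connected_graph V E"
  shows "phi V (round_result x prp acc) \<le> phi V x - spread V x / 32"
  using phi_round_result_le [OF assms(1)] spread_le_accepted_gaps [OF assms] by simp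

end

lemma spread_nonneg:
  assumes "finite V" and "V \<noteq> {}"
  shows "spread V x \<ge> 0"
proof -
  obtain v where "v \<in> V"
    using assms(2) by blast
  have "\<bar>x v - x v\<bar> \<le> spread V x"
    unfolding spread_def by (rule Max_ge) (use assms(1) \<open>v \<in> V\<close> in \<open>auto simp: finite_image_set2\<close>)
  then show ?thesis
    by simp
qed

theorem corollary1:
  fixes V :: "'a set"
    and E :: "nat \<Rightarrow> 'a \<Rightarrow> 'a \<Rightarrow> bool"
    and w :: "nat \<Rightarrow> 'a \<Rightarrow> real"
    and prp acc :: "nat \<Rightarrow> 'a \<Rightarrow> 'a option"
  assumes "finite V" and "V \<noteq> {}"
    and "\<forall>v\<in>V. w 0 v \<ge> 0"
    and "\<forall>r\<ge>1. connected_graph V (E r)"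
    and "\<forall>r\<ge>1. valid_proposals V (E r) (w (r - 1)) (prp r)"
    and "\<forall>r\<ge>1. valid_acceptance V (w (r - 1)) (prp r) (acc r)"
    and "\<forall>r\<ge>1. \<forall>v\<in>V. w r v = round_result (w (r - 1)) (prp r) (acc r) v"
  shows "\<forall>r\<ge>1. phi V (w r) \<le> phi V (w (r - 1)) - spread V (w (r - 1)) / 60"
proof (intro allI impI)
  fix r :: nat
  assume "r \<ge> 1"
  have "phi V (w r) = phi V (round_result (w (r - 1)) (prp r) (acc r))"
    using assms(7) \<open>r \<ge> 1\<close> by (intro phi_cong) simp
  also have "\<dots> \<le> phi V (w (r - 1)) - spread V (w (r - 1)) / 32"
    using phi_round_result_le_spread assms(1,2,4-6) \<open>r \<ge> 1\<close> by blast
  also have "\<dots> \<le> phi V (w (r - 1)) - spread V (w (r - 1)) / 60"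
    using spread_nonneg [OF assms(1,2)] by simp
  finally show "phi V (w r) \<le> phi V (w (r - 1)) - spread V (w (r - 1)) / 60" .
qed

end
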